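(* Assume $n\ge 3t+1$. In any execution of COOL, $\eta^{[2]}\le 2$.
   Context: Setting. $n$ processors indexed by $[1:n]$, pairwise joined by reliable private synchronous channels; recipients know senders. At most $t$ processors are dishonest, controlled by an adversary who may make them deviate arbitrarily (missing values replaced by a fixed default); the others are honest. Processor $i$ holds an $\ell$-bit initial message $\boldsymbol w_i$. $\phi$ is a default value different from every $\ell$-bit message. Logarithms are base 2. Code. $k=\lfloor t/5\rfloor+1$, $c=\lceil \max\{\ell,(t/5+1)\log(n+1)\}/k\rceil$. Messages are zero-padded to $kc$ bits and viewed in $GF(2^c)^k$. Integers in $[1:n]$ are identified with distinct nonzero elements of $GF(2^c)$; $\boldsymbol h_i\in GF(2^c)^k$ has entries $h_{i,j}=\prod_{p\in[1:k],\,p\ne j}\frac{i-p}{j-p}$ (field arithmetic). COOL, Phases 1–2 (honest processor $i$). Initialization: updated message $\boldsymbol w^{(i)}:=\boldsymbol w_i$, $y^{(i)}_j:=\boldsymbol h_j^{\mathsf T}\boldsymbol w_i$, $u_i(i):=1$. Phase 1. (a) Send $(y^{(i)}_j,y^{(i)}_i)$ to each $j\ne i$. (b) For $j\ne i$, link indicator $u_i(j):=1$ if the pair received from $j$ equals $(y^{(i)}_i,y^{(i)}_j)$, else $0$. Success indicator $s_i:=1$ if $\sum_{j=1}^n u_i(j)\ge n-t$; otherwise $s_i:=0$ and $\boldsymbol w^{(i)}:=\phi$. (c) Send $s_i$ to all; each processor records the indicator received from each $j$ (own for itself) and forms $\mathcal S_1=\{j:s_j=1\}$, $\mathcal S_0=\{j:s_j=0\}$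 (views may differ between processors). Phase 2. If $s_i=1$: set $u_i(j):=0$ for all $j\in\mathcal S_0$; if now $\sum_j u_i(j)<n-t$, set $s_i:=0$, $\boldsymbol w^{(i)}:=\phi$ and send $s_i=0$ to all. Everyone overwrites recorded indicators with newly received ones and recomputes $\mathcal S_0,\mathcal S_1$. Notation. For $p\in\{1,2\}$, $s^{[p]}_i$ is the value of honest processor $i$'s success indicator at the end of Phase $p$, and $\eta^{[p]}$ is the number of distinct values in $\{\boldsymbol w_i: i\text{ honest},\ s^{[p]}_i=1\}$ (initial messages). *)

theory Defs
  imports Complex_Main
begin

definition kpar :: "nat \<Rightarrow> nat" where
  "kpar t = t div 5 + 1"

definition cpar :: "nat \<Rightarrow> nat \<Rightarrow> nat \<Rightarrow> nat" where
  "cpar l t n = nat \<lceil> max (real l) ((real t / 5 + 1) * log 2 (real n + 1)) / real (kpar t) \<rceil>"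

definition hcoef :: "(nat \<Rightarrow> 'f::field) \<Rightarrow> nat \<Rightarrow> nat \<Rightarrow> nat \<Rightarrow> 'f" where
  "hcoef \<alpha> k i j = (\<Prod>p\<in>{1..k} - {j}. (\<alpha> i - \<alpha> p) / (\<alpha> j - \<alpha> p))"

text \<open>Zero-pad an l-bit message to k*c bits and split into k chunks of c bits;
  each chunk is mapped to GF(2^c) via the bijection beta.  Result: list of length k
  (coordinate m, 1-based, is entry m-1).\<close>
definition encode :: "(bool list \<Rightarrow> 'f) \<Rightarrow> nat \<Rightarrow> nat \<Rightarrow> bool list \<Rightarrow> 'f list" where
  "encode \<beta> c k w =
     (let pw = w @ replicate (k * c - length w) False
      in map (\<lambda>m. \<beta> (take c (drop (m * c) pw))) [0..<k])"

definition codesym :: "(nat \<Rightarrow> 'f::field) \<Rightarrow> (bool list \<Rightarrow> 'f) \<Rightarrow> nat \<Rightarrow> nat \<Rightarrow> bool list \<Rightarrow> nat \<Rightarrow> 'f" where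
  "codesym \<alpha> \<beta> c k msg j = (\<Sum>m\<in>{1..k}. hcoef \<alpha> k j m * (encode \<beta> c k msg ! (m - 1)))"

definition coolY :: "nat \<Rightarrow> nat \<Rightarrow> nat \<Rightarrow> (nat \<Rightarrow> 'f::field) \<Rightarrow> (bool list \<Rightarrow> 'f)
    \<Rightarrow> (nat \<Rightarrow> bool list) \<Rightarrow> nat \<Rightarrow> nat \<Rightarrow> 'f" where
  "coolY l t n \<alpha> \<beta> w i j = codesym \<alpha> \<beta> (cpar l t n) (kpar t) (w i) j"

text \<open>Pair received by processor i from processor j in Phase 1(a):
  honest j sends (y^{(j)}_i, y^{(j)}_j); dishonest j sends an arbitrary pair adv1 j i.\<close>
definition recv1 :: "(nat \<Rightarrow> nat \<Rightarrow> 'f) \<Rightarrow> nat set \<Rightarrow> (nat \<Rightarrow> nat \<Rightarrow> 'f \<times> 'f) \<Rightarrow> nat \<Rightarrow> nat \<Rightarrow> 'f \<times> 'f" where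
  "recv1 Y H adv1 j i = (if j \<in> H then (Y j i, Y j j) else adv1 j i)"

definition link1 :: "(nat \<Rightarrow> nat \<Rightarrow> 'f) \<Rightarrow> nat set \<Rightarrow> (nat \<Rightarrow> nat \<Rightarrow> 'f \<times> 'f) \<Rightarrow> nat \<Rightarrow> nat \<Rightarrow> bool" where
  "link1 Y H adv1 i j = (j = i \<or> recv1 Y H adv1 j i = (Y i i, Y i j))"

definition succ1 :: "nat \<Rightarrow> nat \<Rightarrow> (nat \<Rightarrow> nat \<Rightarrow> 'f) \<Rightarrow> nat set \<Rightarrow> (nat \<Rightarrow> nat \<Rightarrow> 'f \<times> 'f) \<Rightarrow> nat \<Rightarrow> bool" where
  "succ1 n t Y H adv1 i = (card {j \<in> {1..n}. link1 Y H adv1 i j} \<ge> n - t)"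

text \<open>Indicator of j as recorded by processor i in Phase 1(c): honest j sends its true s_j
  (own value when j = i); dishonest j sends an arbitrary bit adv2 j i.\<close>
definition view1 :: "nat \<Rightarrow> nat \<Rightarrow> (nat \<Rightarrow> nat \<Rightarrow> 'f) \<Rightarrow> nat set \<Rightarrow> (nat \<Rightarrow> nat \<Rightarrow> 'f \<times> 'f)
    \<Rightarrow> (nat \<Rightarrow> nat \<Rightarrow> bool) \<Rightarrow> nat \<Rightarrow> nat \<Rightarrow> bool" where
  "view1 n t Y H adv1 adv2 i j = (if j \<in> H then succ1 n t Y H adv1 j else adv2 j i)"

text \<open>Success indicator at the end of Phase 2: links to j in S_0 are cut.\<close>
definition succ2 :: "nat \<Rightarrow> nat \<Rightarrow> (nat \<Rightarrow> nat \<Rightarrow> 'f) \<Rightarrow> nat set \<Rightarrow> (nat \<Rightarrow> nat \<Rightarrow> 'f \<times> 'f)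
    \<Rightarrow> (nat \<Rightarrow> nat \<Rightarrow> bool) \<Rightarrow> nat \<Rightarrow> bool" where
  "succ2 n t Y H adv1 adv2 i =
     (succ1 n t Y H adv1 i \<and>
      card {j \<in> {1..n}. link1 Y H adv1 i j \<and> view1 n t Y H adv1 adv2 i j} \<ge> n - t)"

end

theory Submission
  imports Defs "HOL-Computational_Algebra.Polynomial"
begin

(* An honest processor i that succeeds in Phase 1 has n - t matching links, so at least
   |H| - t honest processors j hold a symbol y_j^(j) equal to i's codeword symbol y_j^(i).
   The codewords of distinct messages are evaluations of distinct polynomials of degree
   below k, so they agree in at most k - 1 = t div 5 positions, and the consistency sets of
   two processors with distinct messages share at most t div 5 honest processors.  Three
   such sets inside the honest set would force 3 (|H| - t) - 3 (t div 5) <= |H|, which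
   contradicts |H| >= n - t >= 2 t + 1.  Phase 2 only removes successes, so the bound
   carries over to eta^[2]. *)

definition lagrange_basis :: "(nat \<Rightarrow> 'f::field) \<Rightarrow> nat \<Rightarrow> nat \<Rightarrow> 'f poly" where
  "lagrange_basis \<alpha> K m = (\<Prod>p\<in>{1..K} - {m}. [:- \<alpha> p / (\<alpha> m - \<alpha> p), 1 / (\<alpha> m - \<alpha> p):])"

definition interpolant :: "(nat \<Rightarrow> 'f::field) \<Rightarrow> nat \<Rightarrow> (nat \<Rightarrow> 'f) \<Rightarrow> 'f poly" where
  "interpolant \<alpha> K x = (\<Sum>m\<in>{1..K}. smult (x m) (lagrange_basis \<alpha> K m))"

lemma poly_lagrange_basis: "poly (lagrange_basis \<alpha> K m) (\<alpha> j) = hcoef \<alpha> K j m"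
  unfolding lagrange_basis_def hcoef_def poly_prod
  by (rule prod.cong) (auto simp: diff_divide_distrib)

lemma degree_lagrange_basis:
  assumes "m \<in> {1..K}"
  shows "degree (lagrange_basis \<alpha> K m) \<le> K - 1"
proof -
  have "degree (lagrange_basis \<alpha> K m)
      \<le> (\<Sum>p\<in>{1..K} - {m}. degree [:- \<alpha> p / (\<alpha> m - \<alpha> p), 1 / (\<alpha> m - \<alpha> p):])"
    unfolding lagrange_basis_def by (rule degree_prod_sum_le[unfolded comp_def]) simp
  also have "\<dots> \<le> card ({1..K} - {m})"
    using sum_mono[of "{1..K} - {m}" "\<lambda>p. degree [:- \<alpha> p / (\<alpha> m - \<alpha> p), 1 / (\<alpha> m - \<alpha> p):]"
        "\<lambda>_. 1"]
    by simp
  finally show ?thesis using assms by simp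
qed

lemma hcoef_node:
  fixes \<alpha> :: "nat \<Rightarrow> 'f::field"
  assumes inj: "inj_on \<alpha> {1..K}" and "j \<in> {1..K}" and m: "m \<in> {1..K}"
  shows "hcoef \<alpha> K j m = (if j = m then 1 else 0)"
proof (cases "j = m")
  case True
  have "(\<alpha> m - \<alpha> p) / (\<alpha> m - \<alpha> p) = 1" if "p \<in> {1..K} - {m}" for p
    using that inj m by (auto dest: inj_onD)
  then show ?thesis
    using True unfolding hcoef_def by simp
next
  case False
  have "(\<Prod>p\<in>{1..K} - {m}. (\<alpha> j - \<alpha> p) / (\<alpha> m - \<alpha> p)) = 0"
    using False \<open>j \<in> {1..K}\<close> by (subst prod_zero_iff) auto
  then show ?thesis
    using False unfolding hcoef_def by simp
qed

lemma poly_interpolant: "poly (interpolant \<alpha> K x) (\<alpha> j) = (\<Sum>m\<in>{1..K}. hcoef \<alpha> K j m * x m)"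
  unfolding interpolant_def poly_sum poly_smult poly_lagrange_basis by (simp add: mult.commute)

lemma poly_interpolant_node:
  assumes "inj_on \<alpha> {1..K}" and "j \<in> {1..K}"
  shows "poly (interpolant \<alpha> K x) (\<alpha> j) = x j"
proof -
  have "poly (interpolant \<alpha> K x) (\<alpha> j) = (\<Sum>m\<in>{1..K}. (if j = m then 1 else 0) * x m)"
    unfolding poly_interpolant by (rule sum.cong[OF refl]) (simp add: hcoef_node[OF assms])
  then show ?thesis
    using assms(2) by (simp add: if_distrib[of "\<lambda>c. c * _"] cong: if_cong)
qed

lemma degree_interpolant: "degree (interpolant \<alpha> K x) \<le> K - 1"
  unfolding interpolant_def
  by (rule degree_sum_le) (use degree_lagrange_basis in auto)

lemma card_interpolant_agreements_le:
  fixes \<alpha> :: "nat \<Rightarrow> 'f::field"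
  assumes "inj_on \<alpha> {1..K}" and inj: "inj_on \<alpha> J"
    and "m \<in> {1..K}" and "x m \<noteq> y m"
  shows "card {j \<in> J. poly (interpolant \<alpha> K x) (\<alpha> j) = poly (interpolant \<alpha> K y) (\<alpha> j)} \<le> K - 1"
proof -
  define D where "D = interpolant \<alpha> K x - interpolant \<alpha> K y"
  have "poly D (\<alpha> m) \<noteq> 0"
    using assms by (simp add: D_def poly_interpolant_node)
  then have "D \<noteq> 0" by auto
  have "card {j \<in> J. poly D (\<alpha> j) = 0} = card (\<alpha> ` {j \<in> J. poly D (\<alpha> j) = 0})"
    by (rule card_image[symmetric]) (rule inj_on_subset[OF inj], auto)
  also have "\<dots> \<le> card {z. poly D z = 0}"
    by (rule card_mono) (auto simp: poly_roots_finite \<open>D \<noteq> 0\<close>)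
  also have "\<dots> \<le> degree D"
    by (rule card_poly_roots_bound[OF \<open>D \<noteq> 0\<close>])
  also have "\<dots> \<le> K - 1"
    unfolding D_def using degree_diff_le degree_interpolant by blast
  finally show ?thesis
    by (simp add: D_def)
qed

lemma list_eq_by_chunks:
  assumes "length xs = K * C" and "length ys = K * C"
    and chunks: "\<And>m. m < K \<Longrightarrow> take C (drop (m * C) xs) = take C (drop (m * C) ys)"
  shows "xs = ys"
proof (rule nth_equalityI)
  show "length xs = length ys" using assms by simp
  fix i assume "i < length xs"
  then have "i < K * C" using assms by simp
  then have "C > 0" and "i div C < K"
    by (metis div_less_iff_less_mult gr_zeroI mult_0_right not_less_zero)+
  then have "xs ! i = take C (drop (i div C * C) xs) ! (i mod C)"
    and "ys ! i = take C (drop (i div C * C) ys) ! (i mod C)"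
    using \<open>i < K * C\<close> assms(1,2) by (simp_all add: add.commute)
  then show "xs ! i = ys ! i"
    using chunks[OF \<open>i div C < K\<close>] by simp
qed

lemma inj_on_encode:
  assumes inj: "inj_on \<beta> {xs. length xs = C}" and "l \<le> K * C"
  shows "inj_on (encode \<beta> C K) {xs. length xs = l}"
proof (rule inj_onI)
  fix u v :: "bool list"
  assume u: "u \<in> {xs. length xs = l}" and v: "v \<in> {xs. length xs = l}"
    and eq: "encode \<beta> C K u = encode \<beta> C K v"
  define pad where "pad xs = xs @ replicate (K * C - length xs) False" for xs :: "bool list"
  have len_pad: "length (pad xs) = K * C" if "length xs = l" for xs
    using that assms(2) by (simp add: pad_def)
  have "pad u = pad v"
  proof (rule list_eq_by_chunks[OF len_pad len_pad])
    fix m assume "m < K"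
    then have "Suc m * C \<le> K * C" by (intro mult_le_mono1) simp
    then have "length (take C (drop (m * C) (pad xs))) = C" if "length xs = l" for xs
      using len_pad[OF that] by simp
    moreover have "\<beta> (take C (drop (m * C) (pad u))) = \<beta> (take C (drop (m * C) (pad v)))"
      using arg_cong[OF eq, of "\<lambda>ys. ys ! m"] \<open>m < K\<close> by (simp add: encode_def pad_def)
    ultimately show "take C (drop (m * C) (pad u)) = take C (drop (m * C) (pad v))"
      using u v by (auto intro: inj_onD[OF inj])
  qed (use u v in simp_all)
  then have "take l (pad u) = take l (pad v)" by simp
  then show "u = v" using u v by (simp add: pad_def)
qed

lemma card_codesym_agreements_le:
  fixes \<alpha> :: "nat \<Rightarrow> 'f::field"
  assumes "inj_on \<alpha> {1..n}" and "K \<le> n"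
    and "inj_on \<beta> {xs. length xs = C}" and "l \<le> K * C"
    and "length u = l" and "length v = l" and "u \<noteq> v"
  shows "card {j \<in> {1..n}. codesym \<alpha> \<beta> C K u j = codesym \<alpha> \<beta> C K v j} \<le> K - 1"
proof -
  define x where "x xs m = encode \<beta> C K xs ! (m - 1)" for xs m
  have "encode \<beta> C K u \<noteq> encode \<beta> C K v"
    using inj_on_encode[OF assms(3,4)] assms(5-7) by (auto dest: inj_onD)
  then obtain i where "i < K" and "encode \<beta> C K u ! i \<noteq> encode \<beta> C K v ! i"
    using nth_equalityI[of "encode \<beta> C K u" "encode \<beta> C K v"] by (auto simp: encode_def)
  then have node: "Suc i \<in> {1..K}" and differ: "x u (Suc i) \<noteq> x v (Suc i)"
    by (simp_all add: x_def)
  have "inj_on \<alpha> {1..K}"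
    by (rule inj_on_subset[OF assms(1)]) (use assms(2) in auto)
  from card_interpolant_agreements_le[where x = "x u" and y = "x v", OF this assms(1) node differ]
  show ?thesis
    by (simp add: codesym_def poly_interpolant x_def)
qed

lemma le_kpar_mult_cpar: "l \<le> kpar t * cpar l t n"
proof -
  have "real l / real (kpar t) \<le> real (cpar l t n)"
    unfolding cpar_def
    by (rule order.trans[OF divide_right_mono real_nat_ceiling_ge]) simp_all
  moreover have "real (kpar t) > 0"
    by (simp add: kpar_def)
  ultimately have "real l \<le> real (kpar t) * real (cpar l t n)"
    by (simp add: pos_divide_le_eq mult.commute)
  then show ?thesis
    by (metis of_nat_le_iff of_nat_mult)
qed

lemma card_coolY_agreements_le:
  assumes "kpar t \<le> n" and "inj_on \<alpha> {1..n}" and "inj_on \<beta> {xs. length xs = cpar l t n}"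
    and "length (w i) = l" and "length (w i') = l" and "w i \<noteq> w i'"
  shows "card {j \<in> {1..n}. coolY l t n \<alpha> \<beta> w i j = coolY l t n \<alpha> \<beta> w i' j} \<le> t div 5"
  using card_codesym_agreements_le[OF assms(2,1,3) le_kpar_mult_cpar assms(4-6)]
  by (simp add: coolY_def kpar_def)

lemma card_add3_le_card_Un_Int:
  assumes "finite A" and "finite B" and "finite C"
  shows "card A + card B + card C
    \<le> card (A \<union> B \<union> C) + card (A \<inter> B) + card (A \<inter> C) + card (B \<inter> C)"
proof -
  have "card A + card B = card (A \<union> B) + card (A \<inter> B)"
    using assms(1,2) by (rule card_Un_Int)
  moreover have "card (A \<union> B) + card C = card (A \<union> B \<union> C) + card ((A \<union> B) \<inter> C)"
    using assms by (intro card_Un_Int) simp_all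
  moreover have "card ((A \<union> B) \<inter> C) \<le> card (A \<inter> C) + card (B \<inter> C)"
    by (simp add: Int_Un_distrib2 card_Un_le)
  ultimately show ?thesis by linarith
qed

lemma three_large_subsets_card_le:
  assumes "finite H" and "A \<subseteq> H" and "B \<subseteq> H" and "C \<subseteq> H"
    and "card H \<le> card A + t" and "card H \<le> card B + t" and "card H \<le> card C + t"
    and "card (A \<inter> B) \<le> s" and "card (A \<inter> C) \<le> s" and "card (B \<inter> C) \<le> s"
  shows "2 * card H \<le> 3 * t + 3 * s"
proof -
  have "finite A" "finite B" "finite C"
    using assms(1-4) by (auto intro: finite_subset)
  moreover have "card (A \<union> B \<union> C) \<le> card H"
    using assms(1-4) by (intro card_mono) auto
  ultimately show ?thesis
    using card_add3_le_card_Un_Int[of A B C] assms(5-10) by linarith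
qed

lemma card_image_le_2I:
  assumes "\<And>a b c. a \<in> A \<Longrightarrow> b \<in> A \<Longrightarrow> c \<in> A \<Longrightarrow>
      f a \<noteq> f b \<Longrightarrow> f a \<noteq> f c \<Longrightarrow> f b \<noteq> f c \<Longrightarrow> False"
  shows "card (f ` A) \<le> 2"
proof (rule ccontr)
  assume "\<not> card (f ` A) \<le> 2"
  then have "3 \<le> card (f ` A)" by simp
  then obtain S where "S \<subseteq> f ` A" and "card S = 3"
    by (rule obtain_subset_with_card_n)
  then obtain x y z where "{x, y, z} \<subseteq> f ` A" and "x \<noteq> y" "x \<noteq> z" "y \<noteq> z"
    by (auto simp: card_3_iff)
  moreover obtain a b c where "a \<in> A" "b \<in> A" "c \<in> A" "f a = x" "f b = y" "f c = z"
    using \<open>{x, y, z} \<subseteq> f ` A\<close> by (metis imageE insert_subset)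
  ultimately show False
    using assms[of a b c] by simp
qed

definition consistent_honest :: "(nat \<Rightarrow> nat \<Rightarrow> 'f) \<Rightarrow> nat set \<Rightarrow> nat \<Rightarrow> nat set" where
  "consistent_honest Y H i = {j \<in> H. Y j j = Y i j}"

lemma card_consistent_honest_if_succ1:
  assumes "H \<subseteq> {1..n}" and "i \<in> H" and "succ1 n t Y H adv1 i"
  shows "card H \<le> card (consistent_honest Y H i) + t"
proof -
  have "finite H"
    using assms(1) by (rule finite_subset) simp
  have "{j \<in> {1..n}. link1 Y H adv1 i j} \<subseteq> ({1..n} - H) \<union> consistent_honest Y H i"
    using assms(2) by (auto simp: link1_def recv1_def consistent_honest_def)
  then have "card {j \<in> {1..n}. link1 Y H adv1 i j} \<le> card ({1..n} - H) + card (consistent_honest Y H i)"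
    using \<open>finite H\<close>
    by (intro order.trans[OF card_mono card_Un_le]) (auto simp: consistent_honest_def)
  moreover have "card ({1..n} - H) = n - card H" and "card H \<le> n"
    using assms(1) \<open>finite H\<close> by (auto simp: card_Diff_subset dest: card_mono[rotated])
  ultimately show ?thesis
    using assms(3) unfolding succ1_def by linarith
qed

theorem lemma11:
  fixes n t l :: nat
    and \<alpha> :: "nat \<Rightarrow> 'f::{field,finite}"
    and \<beta> :: "bool list \<Rightarrow> 'f"
    and H :: "nat set"
    and w :: "nat \<Rightarrow> bool list"
    and adv1 :: "nat \<Rightarrow> nat \<Rightarrow> 'f \<times> 'f"
    and adv2 :: "nat \<Rightarrow> nat \<Rightarrow> bool"
  assumes "n \<ge> 3 * t + 1"
    and "card (UNIV :: 'f set) = 2 ^ cpar l t n"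
    and "bij_betw \<beta> {xs. length xs = cpar l t n} UNIV"
    and "inj_on \<alpha> {1..n}"
    and "\<forall>i\<in>{1..n}. \<alpha> i \<noteq> 0"
    and "H \<subseteq> {1..n}"
    and "card ({1..n} - H) \<le> t"
    and "\<forall>i\<in>H. length (w i) = l"
  shows "card {w i | i. i \<in> H \<and> succ2 n t (coolY l t n \<alpha> \<beta> w) H adv1 adv2 i} \<le> 2"
proof -
  define Y where "Y = coolY l t n \<alpha> \<beta> w"
  define S where "S i = consistent_honest Y H i" for i
  have "finite H"
    using assms(6) by (rule finite_subset) simp
  have "n \<le> card H + t"
    using assms(6,7) \<open>finite H\<close> card_Diff_subset[of H "{1..n}"] by simp
  have large: "card H \<le> card (S i) + t" if "i \<in> H" "succ2 n t Y H adv1 adv2 i" for i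
    using card_consistent_honest_if_succ1[OF assms(6) that(1)] that(2)
    unfolding S_def succ2_def by blast
  have overlap: "card (S i \<inter> S i') \<le> t div 5" if "i \<in> H" "i' \<in> H" "w i \<noteq> w i'" for i i'
  proof (rule order.trans[OF card_mono card_coolY_agreements_le])
    show "S i \<inter> S i' \<subseteq> {j \<in> {1..n}. coolY l t n \<alpha> \<beta> w i j = coolY l t n \<alpha> \<beta> w i' j}"
      using assms(6) by (auto simp: S_def consistent_honest_def Y_def)
  qed (use assms(1,3,4,8) that in \<open>auto simp: kpar_def bij_betw_imp_inj_on\<close>)
  have "card (w ` {i \<in> H. succ2 n t Y H adv1 adv2 i}) \<le> 2"
  proof (rule card_image_le_2I)
    fix a b c
    assume "a \<in> {i \<in> H. succ2 n t Y H adv1 adv2 i}" "b \<in> {i \<in> H. succ2 n t Y H adv1 adv2 i}"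
      "c \<in> {i \<in> H. succ2 n t Y H adv1 adv2 i}" "w a \<noteq> w b" "w a \<noteq> w c" "w b \<noteq> w c"
    then have "2 * card H \<le> 3 * t + 3 * (t div 5)"
      by (intro three_large_subsets_card_le[OF \<open>finite H\<close>, of "S a" "S b" "S c"] large overlap)
        (auto simp: S_def consistent_honest_def)
    then show False
      using assms(1) \<open>n \<le> card H + t\<close> by linarith
  qed
  moreover have "{w i | i. i \<in> H \<and> succ2 n t Y H adv1 adv2 i} = w ` {i \<in> H. succ2 n t Y H adv1 adv2 i}"
    by blast
  ultimately show ?thesis
    by (simp add: Y_def)
qed

end
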